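(* Let $n\ge4$, let $\mathbf A,\mathbf B\in\mathcal G_n$, let $f\colon\mathbf A\to\mathbf B$ be a homomorphism and let $\sigma\in\Sigma_n$. Then the following are equivalent: (1) $f$ is an embedding (injective); (2) for each $x\in D^\sigma(\mathbf A)$ there exists $y\in D^\sigma(\mathbf B)$ such that $y\circ f\simeq^\sigma_{D^\sigma(\mathbf A)}x$.
   Context: $\mathbf C_n$ is the Heyting algebra on the chain $\{0<1<\dots<n-1\}$, with min, max, $\bot=0$, $\top=n-1$, $a\to b=\top$ if $a\le b$, $a\to b=b$ if $b<a$. $\mathcal G_n$ is the class of algebras isomorphic to subalgebras of direct powers of $\mathbf C_n$; $\mathcal G_n(\mathbf A,\mathbf C_n)$ is the set of Heyting homomorphisms $\mathbf A\to\mathbf C_n$. For $n\ge4$: for $1\le i\le n-2$, $h_i$ is the endomorphism of $\mathbf C_n$ with $h_i(k)=k+1$ if $i\le k<n-1$ and $h_i(k)=k$ otherwise. For $1\le i\le n-3$, $g_i$ is the partial map with domain $C_n\setminus\{i\}$ with $g_i(i+1)=i$, $g_i(k)=k$ for $k\notin\{i,i+1\}$, and $f_i\colon C_n\setminus\{i+1\}\to C_n\setminus\{i\}$ is its inverse. $\Sigma_n=\{f_1,g_1\}\times\dots\times\{f_{n-3},g_{n-3}\}\times\{h_1,\dots,h_{n-2}\}$, elements written $\sigma=(\sigma_1,\dots,\sigma_{n-2})$. $D^\sigma(\mathbf A)$ is $\mathcal G_n(\mathbf A,\mathbf C_n)$ with lifted (partial) operations $\sigma_i^{\mathbf X}(x)=\sigma_i\circ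 x$, defined iff $\operatorname{ran}x\subseteq\operatorname{dom}\sigma_i$. For $\mathbf X=D^\sigma(\mathbf A)$, $x\simeq^\sigma_{\mathbf X}y$ iff $x=y$ or there is a finite sequence $x=z_0,\dots,z_N=y$ in $X$ such that for each $j<N$ some $i_j\in\{1,\dots,n-3\}$ satisfies $z_{j+1}=\sigma_{i_j}^{\mathbf X}(z_j)$ or $z_j=\sigma_{i_j}^{\mathbf X}(z_{j+1})$. *)

theory Defs
  imports "HOL-Library.FuncSet"
begin

record 'a halg =
  hcarrier :: "'a set"
  hmeet :: "'a \<Rightarrow> 'a \<Rightarrow> 'a"
  hjoin :: "'a \<Rightarrow> 'a \<Rightarrow> 'a"
  himp  :: "'a \<Rightarrow> 'a \<Rightarrow> 'a"
  hbot  :: "'a"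
  htop  :: "'a"

definition closed_alg :: "'a halg \<Rightarrow> bool" where
  "closed_alg A \<longleftrightarrow>
     hbot A \<in> hcarrier A \<and> htop A \<in> hcarrier A \<and>
     (\<forall>a\<in>hcarrier A. \<forall>b\<in>hcarrier A.
        hmeet A a b \<in> hcarrier A \<and> hjoin A a b \<in> hcarrier A \<and> himp A a b \<in> hcarrier A)"

definition hom :: "'a halg \<Rightarrow> 'b halg \<Rightarrow> ('a \<Rightarrow> 'b) \<Rightarrow> bool" where
  "hom A B h \<longleftrightarrow>
     h ` hcarrier A \<subseteq> hcarrier B \<and>
     h (hbot A) = hbot B \<and> h (htop A) = htop B \<and>
     (\<forall>a\<in>hcarrier A. \<forall>b\<in>hcarrier A.
        h (hmeet A a b) = hmeet B (h a) (h b) \<and>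
        h (hjoin A a b) = hjoin B (h a) (h b) \<and>
        h (himp A a b) = himp B (h a) (h b))"

definition embedding :: "'a halg \<Rightarrow> 'b halg \<Rightarrow> ('a \<Rightarrow> 'b) \<Rightarrow> bool" where
  "embedding A B h \<longleftrightarrow> hom A B h \<and> inj_on h (hcarrier A)"

definition chain_imp :: "nat \<Rightarrow> nat \<Rightarrow> nat \<Rightarrow> nat" where
  "chain_imp n a b = (if a \<le> b then n - 1 else b)"

definition Cn :: "nat \<Rightarrow> nat halg" where
  "Cn n = \<lparr> hcarrier = {0..<n}, hmeet = min, hjoin = max, himp = chain_imp n,
            hbot = 0, htop = n - 1 \<rparr>"

definition Cn_power :: "nat \<Rightarrow> 'i set \<Rightarrow> ('i \<Rightarrow> nat) halg" where
  "Cn_power n I = \<lparr> hcarrier = I \<rightarrow>\<^sub>E {0..<n},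
      hmeet = (\<lambda>x y. restrict (\<lambda>i. min (x i) (y i)) I),
      hjoin = (\<lambda>x y. restrict (\<lambda>i. max (x i) (y i)) I),
      himp = (\<lambda>x y. restrict (\<lambda>i. chain_imp n (x i) (y i)) I),
      hbot = restrict (\<lambda>i. 0) I,
      htop = restrict (\<lambda>i. n - 1) I \<rparr>"

text \<open>Membership in G_n: isomorphic to a subalgebra of a direct power of C_n.
  The index set is taken of type (a => nat) set, large enough for any algebra on 'a.\<close>
definition in_Gn :: "nat \<Rightarrow> 'a halg \<Rightarrow> bool" where
  "in_Gn n A \<longleftrightarrow> closed_alg A \<and>
     (\<exists>(I :: ('a \<Rightarrow> nat) set) e. embedding A (Cn_power n I) e)"

definition homs_to_Cn :: "nat \<Rightarrow> 'a halg \<Rightarrow> ('a \<Rightarrow> nat) set" where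
  "homs_to_Cn n A = {x \<in> extensional (hcarrier A). hom A (Cn n) x}"

definition h_pm :: "nat \<Rightarrow> nat \<Rightarrow> nat \<rightharpoonup> nat" where
  "h_pm n i k = (if k < n then Some (if i \<le> k \<and> k < n - 1 then k + 1 else k) else None)"

definition g_pm :: "nat \<Rightarrow> nat \<Rightarrow> nat \<rightharpoonup> nat" where
  "g_pm n i k = (if k < n \<and> k \<noteq> i then Some (if k = i + 1 then i else k) else None)"

definition f_pm :: "nat \<Rightarrow> nat \<Rightarrow> nat \<rightharpoonup> nat" where
  "f_pm n i k = (if k < n \<and> k \<noteq> i + 1 then Some (if k = i then i + 1 else k) else None)"

text \<open>sigma = (sigma_1, ..., sigma_{n-2}) encoded as a function of the index;
  entries outside 1..n-2 are empty.\<close>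
definition Sigma_n :: "nat \<Rightarrow> (nat \<Rightarrow> (nat \<rightharpoonup> nat)) set" where
  "Sigma_n n = {\<sigma>. (\<forall>i \<in> {1..n-3}. \<sigma> i = f_pm n i \<or> \<sigma> i = g_pm n i) \<and>
                   (\<exists>j \<in> {1..n-2}. \<sigma> (n - 2) = h_pm n j) \<and>
                   (\<forall>i. i = 0 \<or> n - 2 < i \<longrightarrow> \<sigma> i = Map.empty)}"

definition lift_op :: "'a halg \<Rightarrow> (nat \<rightharpoonup> nat) \<Rightarrow> ('a \<Rightarrow> nat) \<Rightarrow> ('a \<Rightarrow> nat) option" where
  "lift_op A s x = (if x ` hcarrier A \<subseteq> dom s
                    then Some (restrict (\<lambda>a. the (s (x a))) (hcarrier A)) else None)"

definition simeq :: "nat \<Rightarrow> (nat \<Rightarrow> (nat \<rightharpoonup> nat)) \<Rightarrow> 'a halg \<Rightarrow> ('a \<Rightarrow> nat) \<Rightarrow> ('a \<Rightarrow> nat) \<Rightarrow> bool" where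
  "simeq n \<sigma> A x y \<longleftrightarrow> x = y \<or>
     (\<exists>zs :: ('a \<Rightarrow> nat) list. zs \<noteq> [] \<and> hd zs = x \<and> last zs = y \<and>
        set zs \<subseteq> homs_to_Cn n A \<and>
        (\<forall>j. Suc j < length zs \<longrightarrow>
           (\<exists>i \<in> {1..n-3}. lift_op A (\<sigma> i) (zs ! j) = Some (zs ! Suc j) \<or>
                            lift_op A (\<sigma> i) (zs ! Suc j) = Some (zs ! j))))"

end

theory Submission
  imports Defs "HOL-Analysis.Function_Topology"
begin

text \<open>
  For \<open>1 \<le> i \<le> n - 3\<close> both \<open>f\<^sub>i\<close> and \<open>g\<^sub>i\<close> are injective partial maps, so
  \<open>\<simeq>\<^sup>\<sigma>\<close> only relates homomorphisms \<open>A \<rightarrow> C\<^sub>n\<close> with the same kernel. Conversely,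
  two such homomorphisms with the same kernel are \<open>\<simeq>\<^sup>\<sigma>\<close>-related: if a value
  \<open>2 \<le> v < n - 1\<close> is taken but \<open>v - 1\<close> is not, lowering \<open>v\<close> to \<open>v - 1\<close> is a
  step by \<open>\<sigma>\<^sub>i\<close> with \<open>i = v - 1\<close> (forwards if \<open>\<sigma>\<^sub>i = g\<^sub>i\<close>, backwards if
  \<open>\<sigma>\<^sub>i = f\<^sub>i\<close>), and iterating this reaches a gap-free homomorphism, which is
  determined by its kernel.

  Hence condition (2) says that the kernel of every \<open>x : A \<rightarrow> C\<^sub>n\<close> is that of some
  \<open>y \<circ> f\<close>; as the homomorphisms \<open>A \<rightarrow> C\<^sub>n\<close> separate points, this forces \<open>f\<close> to be
  injective. If \<open>f\<close> is injective, we find \<open>y\<close> such that \<open>y \<circ> f\<close> strictly preserves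
  the order of \<open>x\<close> and its top value, which gives the kernel of \<open>x\<close>. On a finite
  set \<open>G\<close> a single coordinate of the embedding \<open>B \<rightarrow> C\<^sub>n\<^sup>I\<close> preserves the strict order:
  the join of the finitely many implications \<open>a \<rightarrow> a'\<close> with \<open>x a' < x a\<close> is not the
  top, so some coordinate is below the top on all of them. Collapsing the values of that
  coordinate above those of \<open>G\<close> below the top then fixes the top, and compactness of
  \<open>{0..<n}\<^sup>B\<close> passes from finite \<open>G\<close> to all of \<open>A\<close>.
\<close>

lemma closed_algD:
  assumes "closed_alg A"
  shows "hbot A \<in> hcarrier A" "htop A \<in> hcarrier A"
    and "\<And>a b. a \<in> hcarrier A \<Longrightarrow> b \<in> hcarrier A \<Longrightarrow> hmeet A a b \<in> hcarrier A"
    and "\<And>a b. a \<in> hcarrier A \<Longrightarrow> b \<in> hcarrier A \<Longrightarrow> hjoin A a b \<in> hcarrier A"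
    and "\<And>a b. a \<in> hcarrier A \<Longrightarrow> b \<in> hcarrier A \<Longrightarrow> himp A a b \<in> hcarrier A"
  using assms by (auto simp: closed_alg_def)

lemma hom_comp: "hom A B f \<Longrightarrow> hom B C g \<Longrightarrow> hom A C (g \<circ> f)"
  unfolding hom_def by (auto simp: image_subset_iff)

lemma hom_restrict: "closed_alg A \<Longrightarrow> hom A C g \<Longrightarrow> hom A C (restrict g (hcarrier A))"
  unfolding hom_def closed_alg_def by (auto simp: image_subset_iff)

lemma hom_Cn_iff:
  "hom A (Cn n) x \<longleftrightarrow> x ` hcarrier A \<subseteq> {0..<n} \<and> x (hbot A) = 0 \<and> x (htop A) = n - 1 \<and>
     (\<forall>a\<in>hcarrier A. \<forall>b\<in>hcarrier A. x (hmeet A a b) = min (x a) (x b) \<and>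
        x (hjoin A a b) = max (x a) (x b) \<and> x (himp A a b) = chain_imp n (x a) (x b))"
  by (simp add: hom_def Cn_def)

lemma homs_to_Cn_less: "u \<in> homs_to_Cn n A \<Longrightarrow> a \<in> hcarrier A \<Longrightarrow> u a < n"
  by (auto simp: homs_to_Cn_def hom_Cn_iff)

lemma chain_imp_eq_top_iff: "p < n \<Longrightarrow> q < n \<Longrightarrow> chain_imp n p q = n - 1 \<longleftrightarrow> p \<le> q"
  by (auto simp: chain_imp_def)

lemma restrict_comp_in_homs_to_Cn:
  assumes "closed_alg A" "hom A B f" "y \<in> homs_to_Cn n B"
  shows "restrict (y \<circ> f) (hcarrier A) \<in> homs_to_Cn n A"
proof -
  have "hom A (Cn n) (y \<circ> f)"
    using assms(2,3) hom_comp by (auto simp: homs_to_Cn_def)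
  then show ?thesis
    using hom_restrict[OF assms(1)] by (simp add: homs_to_Cn_def)
qed

lemma restrict_postcomp_in_homs_to_Cn:
  assumes u: "u \<in> homs_to_Cn n A" and cl: "closed_alg A"
    and "\<And>p q. p \<in> u ` hcarrier A \<Longrightarrow> q \<in> u ` hcarrier A \<Longrightarrow> \<psi> (min p q) = min (\<psi> p) (\<psi> q)"
    and "\<And>p q. p \<in> u ` hcarrier A \<Longrightarrow> q \<in> u ` hcarrier A \<Longrightarrow> \<psi> (max p q) = max (\<psi> p) (\<psi> q)"
    and "\<And>p q. p \<in> u ` hcarrier A \<Longrightarrow> q \<in> u ` hcarrier A \<Longrightarrow>
            \<psi> (chain_imp n p q) = chain_imp n (\<psi> p) (\<psi> q)"
    and "\<psi> 0 = 0" "\<psi> (n - 1) = n - 1"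
    and "\<And>p. p \<in> u ` hcarrier A \<Longrightarrow> \<psi> p < n"
  shows "restrict (\<psi> \<circ> u) (hcarrier A) \<in> homs_to_Cn n A"
  using assms closed_algD[OF cl] unfolding homs_to_Cn_def hom_Cn_iff by auto

definition same_kernel :: "'a halg \<Rightarrow> ('a \<Rightarrow> 'b) \<Rightarrow> ('a \<Rightarrow> 'c) \<Rightarrow> bool" where
  "same_kernel A u v \<longleftrightarrow> (\<forall>a\<in>hcarrier A. \<forall>b\<in>hcarrier A. u a = u b \<longleftrightarrow> v a = v b)"

lemma same_kernel_refl: "same_kernel A u u"
  unfolding same_kernel_def by blast

lemma same_kernel_sym: "same_kernel A u v \<Longrightarrow> same_kernel A v u"
  unfolding same_kernel_def by blast

lemma same_kernel_trans: "same_kernel A u v \<Longrightarrow> same_kernel A v w \<Longrightarrow> same_kernel A u w"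
  unfolding same_kernel_def by blast

lemma inj_on_the_f_pm_g_pm:
  assumes "s = f_pm n i \<or> s = g_pm n i"
  shows "inj_on (\<lambda>k. the (s k)) (dom s)"
  using assms by (auto simp: inj_on_def f_pm_def g_pm_def split: if_splits)

lemma lift_op_same_kernel:
  assumes "inj_on (\<lambda>k. the (s k)) (dom s)" and "lift_op A s z = Some z'"
  shows "same_kernel A z z'"
proof -
  have "z ` hcarrier A \<subseteq> dom s" and z': "z' = restrict (\<lambda>a. the (s (z a))) (hcarrier A)"
    using assms(2) by (auto simp: lift_op_def split: if_splits)
  show ?thesis
    unfolding same_kernel_def
  proof (intro ballI)
    fix a b assume ab: "a \<in> hcarrier A" "b \<in> hcarrier A"
    then have "z a \<in> dom s" "z b \<in> dom s"
      using \<open>z ` hcarrier A \<subseteq> dom s\<close> by auto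
    then show "z a = z b \<longleftrightarrow> z' a = z' b"
      using ab inj_onD[OF assms(1)] unfolding z' by auto
  qed
qed

lemma Sigma_n_entry: "\<sigma> \<in> Sigma_n n \<Longrightarrow> i \<in> {1..n-3} \<Longrightarrow> \<sigma> i = f_pm n i \<or> \<sigma> i = g_pm n i"
  by (auto simp: Sigma_n_def)

lemma simeq_same_kernel:
  assumes sig: "\<sigma> \<in> Sigma_n n" and "simeq n \<sigma> A u x"
  shows "same_kernel A u x"
proof (cases "u = x")
  case True
  then show ?thesis by (simp add: same_kernel_refl)
next
  case False
  then obtain zs where zs: "zs \<noteq> []" "hd zs = u" "last zs = x"
    and steps: "\<And>j. Suc j < length zs \<Longrightarrow> \<exists>i \<in> {1..n-3}.
      lift_op A (\<sigma> i) (zs ! j) = Some (zs ! Suc j) \<or> lift_op A (\<sigma> i) (zs ! Suc j) = Some (zs ! j)"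
    using assms(2) unfolding simeq_def by blast
  have "same_kernel A u (zs ! j)" if "j < length zs" for j
    using that
  proof (induction j)
    case 0
    then show ?case using zs by (simp add: hd_conv_nth same_kernel_refl)
  next
    case (Suc j)
    then obtain i where "i \<in> {1..n-3}" and
      "lift_op A (\<sigma> i) (zs ! j) = Some (zs ! Suc j) \<or> lift_op A (\<sigma> i) (zs ! Suc j) = Some (zs ! j)"
      using steps by blast
    then have "same_kernel A (zs ! j) (zs ! Suc j) \<or> same_kernel A (zs ! Suc j) (zs ! j)"
      using lift_op_same_kernel[OF inj_on_the_f_pm_g_pm[OF Sigma_n_entry[OF sig]]] by blast
    then have "same_kernel A (zs ! j) (zs ! Suc j)"
      using same_kernel_sym by blast
    with Suc show ?case using same_kernel_trans by simp
  qed
  from this[of "length zs - 1"] show ?thesis using zs by (simp add: last_conv_nth)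
qed

definition sigma_step ::
    "nat \<Rightarrow> (nat \<Rightarrow> (nat \<rightharpoonup> nat)) \<Rightarrow> 'a halg \<Rightarrow> ('a \<Rightarrow> nat) \<Rightarrow> ('a \<Rightarrow> nat) \<Rightarrow> bool" where
  "sigma_step n \<sigma> A u v \<longleftrightarrow> u \<in> homs_to_Cn n A \<and> v \<in> homs_to_Cn n A \<and>
     (\<exists>i\<in>{1..n-3}. lift_op A (\<sigma> i) u = Some v \<or> lift_op A (\<sigma> i) v = Some u)"

lemma symp_sigma_step: "symp (sigma_step n \<sigma> A)"
  unfolding symp_def sigma_step_def by blast

lemma simeq_if_rtranclp_sigma_step:
  assumes "(sigma_step n \<sigma> A)\<^sup>*\<^sup>* u v"
  shows "simeq n \<sigma> A u v"
  using assms
proof (induction rule: rtranclp_induct)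
  case base
  then show ?case by (simp add: simeq_def)
next
  case (step y z)
  define link where "link = (\<lambda>s t. \<exists>i \<in> {1..n-3}.
    lift_op A (\<sigma> i) s = Some t \<or> lift_op A (\<sigma> i) t = Some s)"
  have yz: "y \<in> homs_to_Cn n A" "z \<in> homs_to_Cn n A" "link y z"
    using step.hyps(2) by (auto simp: sigma_step_def link_def)
  obtain zs where zs: "zs \<noteq> []" "hd zs = u" "last zs = y" "set zs \<subseteq> homs_to_Cn n A"
    and links: "\<forall>j. Suc j < length zs \<longrightarrow> link (zs ! j) (zs ! Suc j)"
  proof (cases "u = y")
    case True
    then show ?thesis using that[of "[y]"] yz by auto
  next
    case False
    then show ?thesis using that step.IH unfolding simeq_def link_def by blast
  qed
  have "\<forall>j. Suc j < length (zs @ [z]) \<longrightarrow> link ((zs @ [z]) ! j) ((zs @ [z]) ! Suc j)"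
  proof (intro allI impI)
    fix j assume j: "Suc j < length (zs @ [z])"
    show "link ((zs @ [z]) ! j) ((zs @ [z]) ! Suc j)"
    proof (cases "Suc j < length zs")
      case True
      then show ?thesis using links by (simp add: nth_append)
    next
      case False
      then have "j = length zs - 1" using j by simp
      then have "(zs @ [z]) ! j = y" "(zs @ [z]) ! Suc j = z"
        using zs by (auto simp: nth_append last_conv_nth)
      then show ?thesis using yz by simp
    qed
  qed
  then show ?case
    unfolding simeq_def link_def using zs yz by (intro disjI2 exI[of _ "zs @ [z]"]) auto
qed

definition gap_free :: "nat \<Rightarrow> 'a halg \<Rightarrow> ('a \<Rightarrow> nat) \<Rightarrow> bool" where
  "gap_free n A u \<longleftrightarrow> (\<forall>v\<in>u ` hcarrier A. 2 \<le> v \<longrightarrow> v < n - 1 \<longrightarrow> v - 1 \<in> u ` hcarrier A)"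

definition gap_weight :: "nat \<Rightarrow> 'a halg \<Rightarrow> ('a \<Rightarrow> nat) \<Rightarrow> nat" where
  "gap_weight n A u = (\<Sum>k \<in> {k. k < n - 1 \<and> k \<in> u ` hcarrier A}. k)"

definition slide_down :: "nat \<Rightarrow> 'a halg \<Rightarrow> ('a \<Rightarrow> nat) \<Rightarrow> 'a \<Rightarrow> nat" where
  "slide_down v A u = restrict ((\<lambda>k. if k = v then v - 1 else k) \<circ> u) (hcarrier A)"

context
  fixes n v :: nat and A :: "'a halg" and u :: "'a \<Rightarrow> nat"
  assumes u: "u \<in> homs_to_Cn n A"
    and v: "v \<in> u ` hcarrier A" "2 \<le> v" "v < n - 1" "v - 1 \<notin> u ` hcarrier A"
begin

lemma pred_not_value: "a \<in> hcarrier A \<Longrightarrow> u a \<noteq> v - 1"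
  by (metis v(4) image_eqI)

lemma slide_down_le_iff:
  assumes "p \<in> u ` hcarrier A" "q \<in> u ` hcarrier A"
  shows "(if p = v then v - 1 else p) \<le> (if q = v then v - 1 else q) \<longleftrightarrow> p \<le> q"
proof -
  have "p \<noteq> v - 1" "q \<noteq> v - 1" using assms pred_not_value by auto
  then show ?thesis using v(2) by (cases "p = v"; cases "q = v") (simp_all, linarith+)
qed

lemma slide_down_in_homs_to_Cn:
  assumes "closed_alg A"
  shows "slide_down v A u \<in> homs_to_Cn n A"
  unfolding slide_down_def
proof (rule restrict_postcomp_in_homs_to_Cn[OF u assms])
  fix p q assume pq: "p \<in> u ` hcarrier A" "q \<in> u ` hcarrier A"
  note le = slide_down_le_iff[OF pq] slide_down_le_iff[OF pq(2,1)]
  show "(if min p q = v then v - 1 else min p q) =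
      min (if p = v then v - 1 else p) (if q = v then v - 1 else q)"
    using le by (cases "p \<le> q") (auto simp: min_def)
  show "(if max p q = v then v - 1 else max p q) =
      max (if p = v then v - 1 else p) (if q = v then v - 1 else q)"
    using le by (cases "p \<le> q") (auto simp: max_def)
  show "(if chain_imp n p q = v then v - 1 else chain_imp n p q) =
      chain_imp n (if p = v then v - 1 else p) (if q = v then v - 1 else q)"
    using le v(3) by (cases "p \<le> q") (auto simp: chain_imp_def)
next
  fix p assume "p \<in> u ` hcarrier A"
  then have "p < n" using homs_to_Cn_less[OF u] by blast
  then show "(if p = v then v - 1 else p) < n" by auto
qed (use v in auto)

lemma same_kernel_slide_down: "same_kernel A (slide_down v A u) u"
  unfolding same_kernel_def slide_down_def using pred_not_value by force

lemma sigma_step_slide_down: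
  assumes sig: "\<sigma> \<in> Sigma_n n" and cl: "closed_alg A"
  shows "sigma_step n \<sigma> A u (slide_down v A u)"
proof -
  define i where "i = v - 1"
  have i: "i \<in> {1..n-3}" using v(2,3) unfolding i_def by auto
  have range: "u a < n" "u a \<noteq> i" if "a \<in> hcarrier A" for a
    using that homs_to_Cn_less[OF u] pred_not_value unfolding i_def by auto
  have "lift_op A (g_pm n i) u = Some (slide_down v A u)"
  proof -
    have "u ` hcarrier A \<subseteq> dom (g_pm n i)" using range by (auto simp: g_pm_def)
    moreover have "restrict (\<lambda>a. the (g_pm n i (u a))) (hcarrier A) = slide_down v A u"
      unfolding slide_down_def
      by (rule restrict_ext) (use range v(2) in \<open>auto simp: g_pm_def i_def\<close>)
    ultimately show ?thesis by (simp add: lift_op_def)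
  qed
  moreover have "lift_op A (f_pm n i) (slide_down v A u) = Some u"
  proof -
    have "slide_down v A u a < n \<and> slide_down v A u a \<noteq> i + 1" if "a \<in> hcarrier A" for a
      using range[OF that] v(2) that by (cases "u a = v") (auto simp: slide_down_def i_def)
    then have "slide_down v A u ` hcarrier A \<subseteq> dom (f_pm n i)"
      by (auto simp: f_pm_def)
    moreover have "restrict (\<lambda>a. the (f_pm n i (slide_down v A u a))) (hcarrier A) = u"
    proof -
      have "restrict (\<lambda>a. the (f_pm n i (slide_down v A u a))) (hcarrier A) = restrict u (hcarrier A)"
      proof (rule restrict_ext)
        fix a assume a: "a \<in> hcarrier A"
        then show "the (f_pm n i (slide_down v A u a)) = u a"
          using range[OF a] v(2) by (cases "u a = v") (auto simp: f_pm_def slide_down_def i_def)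
      qed
      also have "\<dots> = u" using u by (simp add: homs_to_Cn_def extensional_restrict)
      finally show ?thesis .
    qed
    ultimately show ?thesis by (simp add: lift_op_def)
  qed
  ultimately show ?thesis
    using Sigma_n_entry[OF sig i] i u slide_down_in_homs_to_Cn[OF cl]
    unfolding sigma_step_def by metis
qed

lemma gap_weight_slide_down_less: "gap_weight n A (slide_down v A u) < gap_weight n A u"
proof -
  define \<psi> where "\<psi> = (\<lambda>k::nat. if k = v then v - 1 else k)"
  define T where "T = {k. k < n - 1 \<and> k \<in> u ` hcarrier A}"
  have "{k. k < n - 1 \<and> k \<in> slide_down v A u ` hcarrier A} = \<psi> ` T"
  proof -
    have "slide_down v A u ` hcarrier A = \<psi> ` (u ` hcarrier A)"
      unfolding slide_down_def \<psi>_def by auto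
    moreover have "\<psi> k < n - 1 \<longleftrightarrow> k < n - 1" for k using v(3) unfolding \<psi>_def by auto
    ultimately show ?thesis unfolding T_def by auto
  qed
  moreover have "inj_on \<psi> T"
  proof (rule inj_onI)
    fix p q assume "p \<in> T" "q \<in> T" "\<psi> p = \<psi> q"
    then show "p = q"
      using slide_down_le_iff[of p q] slide_down_le_iff[of q p] unfolding T_def \<psi>_def by auto
  qed
  ultimately have "gap_weight n A (slide_down v A u) = sum \<psi> T"
    unfolding gap_weight_def by (simp add: sum.reindex)
  also have "\<dots> < sum (\<lambda>k. k) T"
  proof (rule sum_strict_mono_ex1)
    have "v \<in> T" "\<psi> v < v" using v(1,2,3) unfolding T_def \<psi>_def by auto
    then show "\<exists>k\<in>T. \<psi> k < k" ..
  qed (auto simp: T_def \<psi>_def)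
  also have "\<dots> = gap_weight n A u" unfolding gap_weight_def T_def ..
  finally show ?thesis .
qed

end

lemma sigma_steps_to_gap_free:
  assumes sig: "\<sigma> \<in> Sigma_n n" and cl: "closed_alg A" and u: "u \<in> homs_to_Cn n A"
  obtains u' where "(sigma_step n \<sigma> A)\<^sup>*\<^sup>* u u'" "gap_free n A u'" "u' \<in> homs_to_Cn n A"
    "same_kernel A u' u"
  using u
proof (induction "gap_weight n A u" arbitrary: u thesis rule: less_induct)
  case less
  show ?case
  proof (cases "gap_free n A u")
    case True
    then show ?thesis using less.prems same_kernel_refl by blast
  next
    case False
    then obtain v where v: "v \<in> u ` hcarrier A" "2 \<le> v" "v < n - 1" "v - 1 \<notin> u ` hcarrier A"
      unfolding gap_free_def by blast
    let ?u1 = "slide_down v A u"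
    show ?thesis
    proof (rule less.hyps[OF gap_weight_slide_down_less[OF less.prems(2) v]])
      fix u' assume u': "(sigma_step n \<sigma> A)\<^sup>*\<^sup>* ?u1 u'" "gap_free n A u'"
        "u' \<in> homs_to_Cn n A" "same_kernel A u' ?u1"
      show thesis
      proof (rule less.prems(1))
        show "(sigma_step n \<sigma> A)\<^sup>*\<^sup>* u u'"
          using sigma_step_slide_down[OF less.prems(2) v sig cl] u'(1)
          by (rule converse_rtranclp_into_rtranclp)
        show "same_kernel A u' u"
          using same_kernel_trans[OF u'(4) same_kernel_slide_down[OF less.prems(2) v]] .
      qed (use u' in auto)
    qed (rule slide_down_in_homs_to_Cn[OF less.prems(2) v cl])
  qed
qed

lemma same_kernel_le_iff:
  assumes cl: "closed_alg A" and u: "u \<in> homs_to_Cn n A" and x: "x \<in> homs_to_Cn n A"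
    and ker: "same_kernel A u x" and ab: "a \<in> hcarrier A" "b \<in> hcarrier A"
  shows "u a \<le> u b \<longleftrightarrow> x a \<le> x b"
proof -
  have "hmeet A a b \<in> hcarrier A" using closed_algD(3)[OF cl ab] .
  have "u a \<le> u b \<longleftrightarrow> u (hmeet A a b) = u a"
    using u ab by (auto simp: homs_to_Cn_def hom_Cn_iff min_def)
  also have "\<dots> \<longleftrightarrow> x (hmeet A a b) = x a"
    using ker \<open>hmeet A a b \<in> hcarrier A\<close> ab unfolding same_kernel_def by blast
  also have "\<dots> \<longleftrightarrow> x a \<le> x b"
    using x ab by (auto simp: homs_to_Cn_def hom_Cn_iff min_def)
  finally show ?thesis .
qed

lemma same_kernel_top_iff:
  assumes cl: "closed_alg A" and u: "u \<in> homs_to_Cn n A" and x: "x \<in> homs_to_Cn n A"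
    and ker: "same_kernel A u x" and a: "a \<in> hcarrier A"
  shows "u a = n - 1 \<longleftrightarrow> x a = n - 1"
proof -
  have "u a = u (htop A) \<longleftrightarrow> x a = x (htop A)"
    using ker a closed_algD(2)[OF cl] unfolding same_kernel_def by blast
  then show ?thesis using u x by (simp add: homs_to_Cn_def hom_Cn_iff)
qed

lemma gap_free_pred_value:
  assumes cl: "closed_alg A" and u: "u \<in> homs_to_Cn n A" and gap: "gap_free n A u"
    and a: "a \<in> hcarrier A" "0 < u a" "u a < n - 1"
  obtains b where "b \<in> hcarrier A" "u b = u a - 1"
proof (cases "u a = 1")
  case True
  then show ?thesis
    using that[of "hbot A"] closed_algD(1)[OF cl] u by (simp add: homs_to_Cn_def hom_Cn_iff)
next
  case False
  then have "u a - 1 \<in> u ` hcarrier A" using gap a unfolding gap_free_def by auto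
  then show ?thesis using that by (metis imageE)
qed

lemma gap_free_same_kernel_eq:
  assumes cl: "closed_alg A" and u: "u \<in> homs_to_Cn n A" and x: "x \<in> homs_to_Cn n A"
    and gu: "gap_free n A u" and gx: "gap_free n A x" and ker: "same_kernel A u x"
  shows "u = x"
proof -
  note le = same_kernel_le_iff[OF cl u x ker]
  have lt: "u a < u b \<longleftrightarrow> x a < x b" if "a \<in> hcarrier A" "b \<in> hcarrier A" for a b
    using le[OF that(2,1)] by (simp add: not_le[symmetric])
  have "x a = u a" if "a \<in> hcarrier A" for a
    using that
  proof (induction "u a" arbitrary: a rule: less_induct)
    case less
    note a = less.prems
    consider "u a = 0" | "u a = n - 1" | "0 < u a" "u a < n - 1"
      using homs_to_Cn_less[OF u a] by linarith
    then show ?case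
    proof cases
      case 1
      then show ?thesis
        using le[OF a closed_algD(1)[OF cl]] u x by (simp add: homs_to_Cn_def hom_Cn_iff)
    next
      case 2
      then show ?thesis using same_kernel_top_iff[OF cl u x ker a] by simp
    next
      case 3
      obtain b where b: "b \<in> hcarrier A" "u b = u a - 1"
        using gap_free_pred_value[OF cl u gu a 3] .
      have "x b = u a - 1" using less.hyps[OF _ b(1)] b(2) 3 by simp
      moreover have "x b < x a" using lt[OF b(1) a] b(2) 3 by simp
      ultimately have "u a \<le> x a" by simp
      moreover have "\<not> u a < x a"
      proof
        assume "u a < x a"
        moreover have "x a < n - 1"
          using same_kernel_top_iff[OF cl u x ker a] homs_to_Cn_less[OF x a] 3 by auto
        ultimately obtain c where c: "c \<in> hcarrier A" "x c = x a - 1"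
          using gap_free_pred_value[OF cl x gx a] by auto
        then have "u b < u c" "u c < u a"
          using lt[OF b(1) c(1)] lt[OF c(1) a] \<open>x b = u a - 1\<close> \<open>u a < x a\<close> 3 by auto
        then show False using b(2) by simp
      qed
      ultimately show ?thesis by simp
    qed
  qed
  moreover have "u \<in> extensional (hcarrier A)" "x \<in> extensional (hcarrier A)"
    using u x by (simp_all add: homs_to_Cn_def)
  ultimately show ?thesis by (metis extensionalityI)
qed

lemma same_kernel_imp_simeq:
  assumes sig: "\<sigma> \<in> Sigma_n n" and cl: "closed_alg A"
    and u: "u \<in> homs_to_Cn n A" and x: "x \<in> homs_to_Cn n A" and ker: "same_kernel A u x"
  shows "simeq n \<sigma> A u x"
proof -
  obtain u' where u': "(sigma_step n \<sigma> A)\<^sup>*\<^sup>* u u'" "gap_free n A u'" "u' \<in> homs_to_Cn n A"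
    "same_kernel A u' u"
    using sigma_steps_to_gap_free[OF sig cl u] .
  obtain x' where x': "(sigma_step n \<sigma> A)\<^sup>*\<^sup>* x x'" "gap_free n A x'" "x' \<in> homs_to_Cn n A"
    "same_kernel A x' x"
    using sigma_steps_to_gap_free[OF sig cl x] .
  have "same_kernel A u' x'"
    using same_kernel_trans[OF same_kernel_trans[OF u'(4) ker] same_kernel_sym[OF x'(4)]] .
  then have "u' = x'"
    by (rule gap_free_same_kernel_eq[OF cl u'(3) x'(3) u'(2) x'(2)])
  moreover have "(sigma_step n \<sigma> A)\<^sup>*\<^sup>* x' x"
    using x'(1) symp_rtranclp[OF symp_sigma_step] by (rule sympD[rotated])
  ultimately have "(sigma_step n \<sigma> A)\<^sup>*\<^sup>* u x"
    using rtranclp_trans[OF u'(1)] by simp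
  then show ?thesis by (rule simeq_if_rtranclp_sigma_step)
qed

lemma hom_Cn_powerD:
  assumes "hom A (Cn_power n J) z"
  shows "\<And>a. a \<in> hcarrier A \<Longrightarrow> z a \<in> J \<rightarrow>\<^sub>E {0..<n}"
    and "z (hbot A) = restrict (\<lambda>i. 0) J" "z (htop A) = restrict (\<lambda>i. n - 1) J"
    and "\<And>a b j. a \<in> hcarrier A \<Longrightarrow> b \<in> hcarrier A \<Longrightarrow> j \<in> J \<Longrightarrow>
       z (hmeet A a b) j = min (z a j) (z b j) \<and> z (hjoin A a b) j = max (z a j) (z b j) \<and>
       z (himp A a b) j = chain_imp n (z a j) (z b j)"
  using assms by (auto simp: hom_def Cn_power_def)

lemma coordinate_in_homs_to_Cn:
  assumes "hom B (Cn_power n J) e" and "closed_alg B" and "j \<in> J"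
  shows "restrict (\<lambda>b. e b j) (hcarrier B) \<in> homs_to_Cn n B"
  using hom_Cn_powerD[OF assms(1)] closed_algD[OF assms(2)] assms(3)
  unfolding homs_to_Cn_def hom_Cn_iff by (auto simp: PiE_iff)

lemma in_Gn_separates_points:
  assumes "in_Gn n A" and ab: "a \<in> hcarrier A" "b \<in> hcarrier A" "a \<noteq> b"
  obtains x where "x \<in> homs_to_Cn n A" "x a \<noteq> x b"
proof -
  obtain I :: "('a \<Rightarrow> nat) set" and e where "embedding A (Cn_power n I) e" and "closed_alg A"
    using assms(1) by (auto simp: in_Gn_def)
  then have e: "hom A (Cn_power n I) e" "inj_on e (hcarrier A)"
    by (auto simp: embedding_def)
  have "e a \<noteq> e b" using e(2) ab by (auto dest: inj_onD)
  moreover have "e a \<in> extensional I" "e b \<in> extensional I"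
    using hom_Cn_powerD(1)[OF e(1)] ab by (auto simp: PiE_iff)
  ultimately obtain i where "i \<in> I" "e a i \<noteq> e b i"
    by (meson extensionalityI)
  then show ?thesis
    using that coordinate_in_homs_to_Cn[OF e(1) \<open>closed_alg A\<close>] ab by force
qed

lemma restrict_collapse_in_homs_to_Cn:
  assumes u: "u \<in> homs_to_Cn n A" and cl: "closed_alg A" and "1 \<le> \<theta>"
  shows "restrict ((\<lambda>k. if \<theta> \<le> k then n - 1 else k) \<circ> u) (hcarrier A) \<in> homs_to_Cn n A"
proof (rule restrict_postcomp_in_homs_to_Cn[OF u cl])
  fix p q assume "p \<in> u ` hcarrier A" "q \<in> u ` hcarrier A"
  then have pq: "p < n" "q < n" using homs_to_Cn_less[OF u] by auto
  show "(if \<theta> \<le> min p q then n - 1 else min p q) =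
      min (if \<theta> \<le> p then n - 1 else p) (if \<theta> \<le> q then n - 1 else q)"
    using pq by (auto simp: min_def)
  show "(if \<theta> \<le> max p q then n - 1 else max p q) =
      max (if \<theta> \<le> p then n - 1 else p) (if \<theta> \<le> q then n - 1 else q)"
    using pq by (auto simp: max_def)
  show "(if \<theta> \<le> chain_imp n p q then n - 1 else chain_imp n p q) =
      chain_imp n (if \<theta> \<le> p then n - 1 else p) (if \<theta> \<le> q then n - 1 else q)"
    using pq by (auto simp: chain_imp_def)
next
  fix p assume "p \<in> u ` hcarrier A"
  then have "p < n" using homs_to_Cn_less[OF u] by auto
  then show "(if \<theta> \<le> p then n - 1 else p) < n" by auto
qed (use assms(3) in auto)

definition lifts_strictly_on :: "nat \<Rightarrow> 'a set \<Rightarrow> ('a \<Rightarrow> nat) \<Rightarrow> ('a \<Rightarrow> 'b) \<Rightarrow> ('b \<Rightarrow> nat) \<Rightarrow> bool" where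
  "lifts_strictly_on n G x f y \<longleftrightarrow>
     (\<forall>a\<in>G. \<forall>a'\<in>G. x a < x a' \<longrightarrow> y (f a) < y (f a')) \<and> (\<forall>a\<in>G. x a = n - 1 \<longrightarrow> y (f a) = n - 1)"

lemma lifts_strictly_on_subset:
  "lifts_strictly_on n G x f y \<Longrightarrow> H \<subseteq> G \<Longrightarrow> lifts_strictly_on n H x f y"
  unfolding lifts_strictly_on_def by blast

lemma lifts_strictly_on_iff_pairs:
  "lifts_strictly_on n G x f y \<longleftrightarrow> (\<forall>a\<in>G. \<forall>a'\<in>G. lifts_strictly_on n {a, a'} x f y)"
  unfolding lifts_strictly_on_def by blast

lemma join_of_finite_below_top:
  assumes cl: "closed_alg A" and z: "hom A (Cn_power n J) z" and x: "x \<in> homs_to_Cn n A"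
    and n: "2 \<le> n" and D: "finite D" "D \<subseteq> hcarrier A" "\<forall>d\<in>D. x d < n - 1"
  obtains w where "w \<in> hcarrier A" "x w < n - 1" "\<forall>j\<in>J. (\<exists>d\<in>D. z d j = n - 1) \<longrightarrow> z w j = n - 1"
  using D
proof (induction D arbitrary: thesis rule: finite_induct)
  case empty
  have "x (hbot A) = 0" using x by (simp add: homs_to_Cn_def hom_Cn_iff)
  then show ?case using empty.prems(1)[of "hbot A"] closed_algD(1)[OF cl] n by simp
next
  case (insert d D)
  obtain w where w: "w \<in> hcarrier A" "x w < n - 1"
    "\<forall>j\<in>J. (\<exists>d\<in>D. z d j = n - 1) \<longrightarrow> z w j = n - 1"
    using insert.IH insert.prems(2,3) by blast
  have d: "d \<in> hcarrier A" "x d < n - 1" using insert.prems(2,3) by auto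
  have "x (hjoin A d w) = max (x d) (x w)"
    using x d w by (simp add: homs_to_Cn_def hom_Cn_iff)
  moreover have "z (hjoin A d w) j = n - 1" if "j \<in> J" "\<exists>d'\<in>insert d D. z d' j = n - 1" for j
  proof -
    have "z d j < n" "z w j < n" using hom_Cn_powerD(1)[OF z] d w \<open>j \<in> J\<close> by (auto simp: PiE_iff)
    moreover have "z d j = n - 1 \<or> z w j = n - 1" using that w(3) by auto
    ultimately show ?thesis using hom_Cn_powerD(4)[OF z d(1) w(1) \<open>j \<in> J\<close>] by auto
  qed
  ultimately show ?case
    using insert.prems(1)[of "hjoin A d w"] closed_algD(4)[OF cl d(1) w(1)] d w by auto
qed

lemma coordinate_avoiding_top:
  assumes n: "2 \<le> n" and cl: "closed_alg A" and hf: "hom A B f" and inj: "inj_on f (hcarrier A)"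
    and emb: "embedding B (Cn_power n J) e" and x: "x \<in> homs_to_Cn n A"
    and D: "finite D" "D \<subseteq> hcarrier A" "\<forall>d\<in>D. x d < n - 1"
  obtains j where "j \<in> J" "\<forall>d\<in>D. e (f d) j \<noteq> n - 1"
proof -
  have e: "hom B (Cn_power n J) e" "inj_on e (hcarrier B)" using emb by (auto simp: embedding_def)
  have z: "hom A (Cn_power n J) (e \<circ> f)" using hom_comp[OF hf e(1)] .
  obtain w where w: "w \<in> hcarrier A" "x w < n - 1"
    "\<forall>j\<in>J. (\<exists>d\<in>D. e (f d) j = n - 1) \<longrightarrow> e (f w) j = n - 1"
    using join_of_finite_below_top[OF cl z x n D] by auto
  have "\<exists>j\<in>J. e (f w) j \<noteq> n - 1"
  proof (rule ccontr)
    assume "\<not> ?thesis"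
    then have "e (f w) = e (f (htop A))"
      using hom_Cn_powerD(1,3)[OF z] w(1) by (intro extensionalityI[of _ J]) (auto simp: PiE_iff)
    moreover have "f w \<in> hcarrier B" "f (htop A) \<in> hcarrier B"
      using hf w(1) closed_algD(2)[OF cl] by (auto simp: hom_def)
    ultimately have "w = htop A"
      using inj_onD[OF e(2)] inj_onD[OF inj] w(1) closed_algD(2)[OF cl] by metis
    then show False using w(2) x by (simp add: homs_to_Cn_def hom_Cn_iff)
  qed
  then show ?thesis using that w(3) by blast
qed

lemma collapse_lifting:
  assumes n: "2 \<le> n" and clB: "closed_alg B" and hf: "hom A B f"
    and x: "x \<in> homs_to_Cn n A" and p: "p \<in> homs_to_Cn n B"
    and G: "finite G" "G \<subseteq> hcarrier A" "hbot A \<in> G"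
    and mono: "\<And>a a'. a \<in> G \<Longrightarrow> a' \<in> G \<Longrightarrow> x a < x a' \<Longrightarrow> p (f a) < p (f a')"
  shows "\<exists>y\<in>homs_to_Cn n B. lifts_strictly_on n G x f y"
proof -
  define V where "V = insert 0 ((\<lambda>a. p (f a)) ` {a \<in> G. x a < n - 1})"
  define \<theta> where "\<theta> = Suc (Max V)"
  define y where "y = restrict ((\<lambda>k. if \<theta> \<le> k then n - 1 else k) \<circ> p) (hcarrier B)"
  have "finite V" using G(1) unfolding V_def by simp
  have y: "y \<in> homs_to_Cn n B"
    unfolding y_def by (rule restrict_collapse_in_homs_to_Cn[OF p clB]) (simp add: \<theta>_def)
  have fB: "f a \<in> hcarrier B" if "a \<in> hcarrier A" for a
    using hf that by (auto simp: hom_def)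
  have below: "p (f a) < \<theta>" if "a \<in> G" "x a < n - 1" for a
    using that Max_ge[OF \<open>finite V\<close>, of "p (f a)"] unfolding V_def \<theta>_def by auto
  have above: "\<theta> \<le> p (f c)" if "c \<in> G" "x c = n - 1" for c
  proof -
    have "x (hbot A) = 0" using x by (simp add: homs_to_Cn_def hom_Cn_iff)
    then have "0 < p (f c)" using mono[OF G(3) that(1)] that(2) n by fastforce
    moreover have "p (f a) < p (f c)" if "a \<in> G" "x a < n - 1" for a
      using mono that \<open>c \<in> G\<close> \<open>x c = n - 1\<close> by simp
    ultimately have "Max V < p (f c)"
      using \<open>finite V\<close> unfolding V_def by (auto simp: Max_less_iff)
    then show ?thesis unfolding \<theta>_def by simp
  qed
  have "lifts_strictly_on n G x f y"
    unfolding lifts_strictly_on_def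
  proof (intro conjI ballI impI)
    fix a a' assume a: "a \<in> G" "a' \<in> G" and "x a < x a'"
    then have "x a < n - 1" using homs_to_Cn_less[OF x, of a'] G(2) by auto
    moreover have "p (f a) < p (f a')" "p (f a') < n"
      using mono[OF a \<open>x a < x a'\<close>] homs_to_Cn_less[OF p fB, of a'] a G(2) by auto
    ultimately show "y (f a) < y (f a')"
      using below[OF a(1)] fB a G(2) unfolding y_def by auto
  next
    fix a assume "a \<in> G" "x a = n - 1"
    then show "y (f a) = n - 1" using above fB G(2) unfolding y_def by auto
  qed
  then show ?thesis using y by blast
qed

lemma finite_lifting:
  assumes n: "2 \<le> n" and clA: "closed_alg A" and clB: "closed_alg B" and hf: "hom A B f"
    and inj: "inj_on f (hcarrier A)" and emb: "embedding B (Cn_power n J) e"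
    and x: "x \<in> homs_to_Cn n A" and G: "finite G" "G \<subseteq> hcarrier A"
  shows "\<exists>y\<in>homs_to_Cn n B. lifts_strictly_on n G x f y"
proof -
  define G' where "G' = insert (hbot A) G"
  have G': "finite G'" "G' \<subseteq> hcarrier A" "hbot A \<in> G'"
    using G closed_algD(1)[OF clA] unfolding G'_def by auto
  define D where "D = (\<lambda>(a, a'). himp A a a') ` {(a, a') \<in> G' \<times> G'. x a' < x a}"
  have x_imp: "x (himp A a a') = chain_imp n (x a) (x a')"
    if "a \<in> hcarrier A" "a' \<in> hcarrier A" for a a'
    using x that by (simp add: homs_to_Cn_def hom_Cn_iff)
  have "finite D"
    unfolding D_def using G'(1) by (auto intro: finite_subset[of _ "G' \<times> G'"])
  moreover have "D \<subseteq> hcarrier A"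
    using G'(2) closed_algD(5)[OF clA] unfolding D_def by auto
  moreover have "\<forall>d\<in>D. x d < n - 1"
    using G' x_imp homs_to_Cn_less[OF x] unfolding D_def by (force simp: chain_imp_def)
  ultimately obtain j where j: "j \<in> J" "\<forall>d\<in>D. e (f d) j \<noteq> n - 1"
    using coordinate_avoiding_top[OF n clA hf inj emb x] by blast
  have he: "hom B (Cn_power n J) e" using emb by (simp add: embedding_def)
  define p where "p = restrict (\<lambda>b. e b j) (hcarrier B)"
  have p: "p \<in> homs_to_Cn n B" unfolding p_def by (rule coordinate_in_homs_to_Cn[OF he clB j(1)])
  define u where "u = restrict (p \<circ> f) (hcarrier A)"
  have u: "u \<in> homs_to_Cn n A" unfolding u_def by (rule restrict_comp_in_homs_to_Cn[OF clA hf p])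
  have "p (f a') < p (f a)" if "a \<in> G'" "a' \<in> G'" "x a' < x a" for a a'
  proof -
    have a: "a \<in> hcarrier A" "a' \<in> hcarrier A" using that G' by auto
    have "himp A a a' \<in> D" unfolding D_def using that by blast
    then have "u (himp A a a') \<noteq> n - 1"
      using j(2) closed_algD(5)[OF clA a] hf unfolding u_def p_def by (auto simp: hom_def)
    then have "chain_imp n (u a) (u a') \<noteq> n - 1"
      using u a by (simp add: homs_to_Cn_def hom_Cn_iff)
    then have "u a' < u a"
      using chain_imp_eq_top_iff homs_to_Cn_less[OF u] a by (meson not_le)
    then show ?thesis using a unfolding u_def by simp
  qed
  then obtain y where "y \<in> homs_to_Cn n B" "lifts_strictly_on n G' x f y"
    using collapse_lifting[OF n clB hf x p G'] by blast
  then show ?thesis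
    using lifts_strictly_on_subset[of n G' x f y G] unfolding G'_def by blast
qed

lemma closedin_cylinder:
  assumes "finite K" "K \<subseteq> I"
  shows "closedin (product_topology (\<lambda>_. discrete_topology V) I) {y \<in> I \<rightarrow>\<^sub>E V. \<forall>k\<in>K. y k = g k}"
  using assms
proof (induction K rule: finite_induct)
  case empty
  then show ?case
    using closedin_topspace[of "product_topology (\<lambda>_. discrete_topology V) I"] by simp
next
  case (insert k K)
  have "closedin (product_topology (\<lambda>_. discrete_topology V) I)
      {y \<in> topspace (product_topology (\<lambda>_. discrete_topology V) I). y k \<in> {g k} \<inter> V}"
    using insert.prems
    by (intro closedin_continuous_map_preimage[OF continuous_map_product_projection]) auto
  moreover have "{y \<in> I \<rightarrow>\<^sub>E V. \<forall>k'\<in>insert k K. y k' = g k'} =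
      {y \<in> topspace (product_topology (\<lambda>_. discrete_topology V) I). y k \<in> {g k} \<inter> V} \<inter>
      {y \<in> I \<rightarrow>\<^sub>E V. \<forall>k\<in>K. y k = g k}"
    using insert.prems by (auto simp: PiE_iff)
  ultimately show ?case using insert by auto
qed

lemma closedin_finitely_determined:
  assumes K: "finite K" "K \<subseteq> I" and V: "finite V" and S: "S \<subseteq> I \<rightarrow>\<^sub>E V"
    and determined: "\<And>y y'. y \<in> S \<Longrightarrow> y' \<in> I \<rightarrow>\<^sub>E V \<Longrightarrow> (\<forall>k\<in>K. y' k = y k) \<Longrightarrow> y' \<in> S"
  shows "closedin (product_topology (\<lambda>_. discrete_topology V) I) S"
proof -
  define C where "C = (\<lambda>g. {y \<in> I \<rightarrow>\<^sub>E V. \<forall>k\<in>K. y k = g k})"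
  have "S = (\<Union>y\<in>S. C (restrict y K))"
  proof
    show "S \<subseteq> (\<Union>y\<in>S. C (restrict y K))"
    proof
      fix y assume "y \<in> S"
      then have "y \<in> C (restrict y K)" using S unfolding C_def by auto
      then show "y \<in> (\<Union>y\<in>S. C (restrict y K))" using \<open>y \<in> S\<close> by blast
    qed
    show "(\<Union>y\<in>S. C (restrict y K)) \<subseteq> S"
      using determined unfolding C_def by auto
  qed
  also have "\<dots> = \<Union> (C ` (\<lambda>y. restrict y K) ` S)" by auto
  finally have S_eq: "S = \<Union> (C ` (\<lambda>y. restrict y K) ` S)" .
  have "finite ((\<lambda>y. restrict y K) ` S)"
  proof (rule finite_subset)
    show "(\<lambda>y. restrict y K) ` S \<subseteq> K \<rightarrow>\<^sub>E V" using S K(2) by (fastforce simp: PiE_iff)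
  qed (use K V in \<open>simp add: finite_PiE\<close>)
  then have "closedin (product_topology (\<lambda>_. discrete_topology V) I) (\<Union> (C ` (\<lambda>y. restrict y K) ` S))"
    by (intro closedin_Union) (auto simp: C_def intro: closedin_cylinder[OF K])
  then show ?thesis using S_eq by simp
qed

lemma homs_to_Cn_subset_PiE: "homs_to_Cn n B \<subseteq> hcarrier B \<rightarrow>\<^sub>E {0..<n}"
  by (auto simp: homs_to_Cn_def hom_Cn_iff PiE_iff extensional_def)

lemma closedin_homs_to_Cn:
  assumes cl: "closed_alg B"
  shows "closedin (product_topology (\<lambda>_. discrete_topology {0..<n}) (hcarrier B)) (homs_to_Cn n B)"
proof -
  define C where "C = (\<lambda>(b, b'). {y \<in> hcarrier B \<rightarrow>\<^sub>E {0..<n}.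
      y (hbot B) = 0 \<and> y (htop B) = n - 1 \<and> y (hmeet B b b') = min (y b) (y b') \<and>
      y (hjoin B b b') = max (y b) (y b') \<and> y (himp B b b') = chain_imp n (y b) (y b')})"
  have "homs_to_Cn n B = (\<Inter>p\<in>hcarrier B \<times> hcarrier B. C p)"
  proof
    show "homs_to_Cn n B \<subseteq> (\<Inter>p\<in>hcarrier B \<times> hcarrier B. C p)"
    proof
      fix y assume y: "y \<in> homs_to_Cn n B"
      then have "y \<in> hcarrier B \<rightarrow>\<^sub>E {0..<n}" using homs_to_Cn_subset_PiE by blast
      with y show "y \<in> (\<Inter>p\<in>hcarrier B \<times> hcarrier B. C p)"
        unfolding C_def by (auto simp: homs_to_Cn_def hom_Cn_iff)
    qed
    show "(\<Inter>p\<in>hcarrier B \<times> hcarrier B. C p) \<subseteq> homs_to_Cn n B"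
    proof
      fix y assume y: "y \<in> (\<Inter>p\<in>hcarrier B \<times> hcarrier B. C p)"
      then have "y \<in> C (hbot B, hbot B)" using closed_algD(1)[OF cl] by blast
      then have "y \<in> hcarrier B \<rightarrow>\<^sub>E {0..<n}" "y (hbot B) = 0" "y (htop B) = n - 1"
        unfolding C_def by auto
      then show "y \<in> homs_to_Cn n B"
        using y unfolding C_def homs_to_Cn_def hom_Cn_iff by (auto simp: PiE_iff)
    qed
  qed
  moreover have "closedin (product_topology (\<lambda>_. discrete_topology {0..<n}) (hcarrier B)) (C (b, b'))"
    if "b \<in> hcarrier B" "b' \<in> hcarrier B" for b b'
    by (rule closedin_finitely_determined
        [of "{hbot B, htop B, b, b', hmeet B b b', hjoin B b b', himp B b b'}"])
      (use that closed_algD[OF cl] in \<open>auto simp: C_def\<close>)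
  ultimately show ?thesis
    using closed_algD(1)[OF cl] by (auto intro!: closedin_INT)
qed

lemma order_lifting:
  assumes n: "2 \<le> n" and clA: "closed_alg A" and clB: "closed_alg B" and hf: "hom A B f"
    and inj: "inj_on f (hcarrier A)" and emb: "embedding B (Cn_power n J) e"
    and x: "x \<in> homs_to_Cn n A"
  shows "\<exists>y\<in>homs_to_Cn n B. lifts_strictly_on n (hcarrier A) x f y"
proof -
  define X where "X = product_topology (\<lambda>_. discrete_topology {0..<n}) (hcarrier B)"
  define K where "K = (\<lambda>(a, a'). {y \<in> homs_to_Cn n B. lifts_strictly_on n {a, a'} x f y})"
  have "\<forall>C \<in> K ` (hcarrier A \<times> hcarrier A). closedin X C"
  proof (intro ballI, elim imageE, clarify)
    fix a a' assume a: "a \<in> hcarrier A" "a' \<in> hcarrier A"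
    then have "f a \<in> hcarrier B" "f a' \<in> hcarrier B" using hf by (auto simp: hom_def)
    then have "closedin X {y \<in> hcarrier B \<rightarrow>\<^sub>E {0..<n}. lifts_strictly_on n {a, a'} x f y}"
      unfolding X_def
      by (intro closedin_finitely_determined[of "{f a, f a'}"]) (auto simp: lifts_strictly_on_def)
    moreover have "K (a, a') = homs_to_Cn n B \<inter>
        {y \<in> hcarrier B \<rightarrow>\<^sub>E {0..<n}. lifts_strictly_on n {a, a'} x f y}"
      using homs_to_Cn_subset_PiE unfolding K_def by auto
    ultimately show "closedin X (K (a, a'))"
      using closedin_homs_to_Cn[OF clB] unfolding X_def by auto
  qed
  moreover have "\<forall>F. finite F \<and> F \<subseteq> K ` (hcarrier A \<times> hcarrier A) \<longrightarrow> \<Inter>F \<noteq> {}"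
  proof (intro allI impI, elim conjE)
    fix F assume F: "finite F" "F \<subseteq> K ` (hcarrier A \<times> hcarrier A)"
    obtain Q where Q: "Q \<subseteq> hcarrier A \<times> hcarrier A" "finite Q" "F = K ` Q"
      using finite_subset_image[OF F] by blast
    define G where "G = fst ` Q \<union> snd ` Q"
    have "finite G" "G \<subseteq> hcarrier A" using Q unfolding G_def by auto
    then obtain y where y: "y \<in> homs_to_Cn n B" "lifts_strictly_on n G x f y"
      using finite_lifting[OF n clA clB hf inj emb x] by blast
    have "y \<in> K (a, a')" if "(a, a') \<in> Q" for a a'
    proof -
      have "{a, a'} \<subseteq> G" using that unfolding G_def by force
      then show ?thesis using y lifts_strictly_on_subset unfolding K_def by blast
    qed
    then have "y \<in> \<Inter>F" unfolding Q(3) by auto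
    then show "\<Inter>F \<noteq> {}" by blast
  qed
  moreover have "compact_space X"
    unfolding X_def by (simp add: compact_space_product_topology compact_space_discrete_topology)
  ultimately have "\<Inter> (K ` (hcarrier A \<times> hcarrier A)) \<noteq> {}"
    unfolding compact_space_fip by blast
  then obtain y where y: "y \<in> \<Inter> (K ` (hcarrier A \<times> hcarrier A))"
    by blast
  then have "y \<in> homs_to_Cn n B"
    using closed_algD(1)[OF clA] unfolding K_def by blast
  moreover have "lifts_strictly_on n (hcarrier A) x f y"
    using y unfolding lifts_strictly_on_iff_pairs[of n "hcarrier A"] K_def by blast
  ultimately show ?thesis by blast
qed

lemma same_kernel_if_lifts_strictly:
  assumes x: "x \<in> homs_to_Cn n A" and y: "y \<in> homs_to_Cn n B"
    and cl: "closed_alg A" and hf: "hom A B f"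
    and lifts: "lifts_strictly_on n (hcarrier A) x f y"
  shows "same_kernel A (restrict (y \<circ> f) (hcarrier A)) x"
proof -
  have yf: "hom A (Cn n) (y \<circ> f)"
    using hom_comp[OF hf, of "Cn n" y] y by (simp add: homs_to_Cn_def)
  have le: "y (f a) \<le> y (f b)" if ab: "a \<in> hcarrier A" "b \<in> hcarrier A" "x a \<le> x b" for a b
  proof -
    have "x (himp A a b) = n - 1"
      using x ab by (simp add: homs_to_Cn_def hom_Cn_iff chain_imp_def)
    then have "y (f (himp A a b)) = n - 1"
      using lifts closed_algD(5)[OF cl ab(1,2)] unfolding lifts_strictly_on_def by blast
    moreover have "y (f (himp A a b)) = chain_imp n (y (f a)) (y (f b))"
      "y (f a) < n" "y (f b) < n"
      using yf ab(1,2) unfolding hom_Cn_iff by auto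
    ultimately show ?thesis
      using chain_imp_eq_top_iff by simp
  qed
  show ?thesis
    unfolding same_kernel_def
  proof (intro ballI)
    fix a b assume ab: "a \<in> hcarrier A" "b \<in> hcarrier A"
    have "x a \<noteq> x b \<Longrightarrow> y (f a) \<noteq> y (f b)"
      using lifts ab unfolding lifts_strictly_on_def by (metis less_irrefl nat_neq_iff)
    then show "restrict (y \<circ> f) (hcarrier A) a = restrict (y \<circ> f) (hcarrier A) b \<longleftrightarrow> x a = x b"
      using le[OF ab] le[OF ab(2,1)] ab by fastforce
  qed
qed

theorem lemma6p3:
  fixes n :: nat and A :: "'a halg" and B :: "'b halg" and f :: "'a \<Rightarrow> 'b"
    and \<sigma> :: "nat \<Rightarrow> (nat \<rightharpoonup> nat)"
  assumes "n \<ge> 4" and "in_Gn n A" and "in_Gn n B" and "hom A B f"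
    and "\<sigma> \<in> Sigma_n n"
  shows "inj_on f (hcarrier A) \<longleftrightarrow>
         (\<forall>x \<in> homs_to_Cn n A. \<exists>y \<in> homs_to_Cn n B.
            simeq n \<sigma> A (restrict (y \<circ> f) (hcarrier A)) x)"
proof
  have n: "2 \<le> n" and clA: "closed_alg A" and clB: "closed_alg B"
    using assms(1-3) by (auto simp: in_Gn_def)
  obtain I :: "('b \<Rightarrow> nat) set" and e where emb: "embedding B (Cn_power n I) e"
    using assms(3) by (auto simp: in_Gn_def)
  assume inj: "inj_on f (hcarrier A)"
  show "\<forall>x \<in> homs_to_Cn n A. \<exists>y \<in> homs_to_Cn n B. simeq n \<sigma> A (restrict (y \<circ> f) (hcarrier A)) x"
  proof
    fix x assume x: "x \<in> homs_to_Cn n A"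
    then obtain y where y: "y \<in> homs_to_Cn n B" "lifts_strictly_on n (hcarrier A) x f y"
      using order_lifting[OF n clA clB assms(4) inj emb] by blast
    then have "same_kernel A (restrict (y \<circ> f) (hcarrier A)) x"
      using same_kernel_if_lifts_strictly[OF x _ clA assms(4)] by blast
    then show "\<exists>y \<in> homs_to_Cn n B. simeq n \<sigma> A (restrict (y \<circ> f) (hcarrier A)) x"
      using same_kernel_imp_simeq[OF assms(5) clA restrict_comp_in_homs_to_Cn[OF clA assms(4) y(1)] x]
        y(1) by blast
  qed
next
  assume lifted: "\<forall>x \<in> homs_to_Cn n A. \<exists>y \<in> homs_to_Cn n B.
    simeq n \<sigma> A (restrict (y \<circ> f) (hcarrier A)) x"
  show "inj_on f (hcarrier A)"
  proof (rule inj_onI, rule ccontr)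
    fix a b assume ab: "a \<in> hcarrier A" "b \<in> hcarrier A" "f a = f b" "a \<noteq> b"
    obtain x where x: "x \<in> homs_to_Cn n A" "x a \<noteq> x b"
      using in_Gn_separates_points[OF assms(2) ab(1,2,4)] .
    then obtain y where "simeq n \<sigma> A (restrict (y \<circ> f) (hcarrier A)) x"
      using lifted by blast
    then have "same_kernel A (restrict (y \<circ> f) (hcarrier A)) x"
      by (rule simeq_same_kernel[OF assms(5)])
    then show False
      using x(2) ab unfolding same_kernel_def by fastforce
  qed
qed

end
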